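(* Let $\Omega\subset\mathbb{R}^3$ be a MAC compatible bounded domain and $\mathcal D=(\mathcal M,\mathcal E)$ a MAC grid of $\Omega$. For $i,j\in\{1,2,3\}$ define $\mathcal R^{(i,j)}_{\mathcal E}:H^{(i)}_{\mathcal E,0}\to H^{(j)}_{\mathcal E,0}$ by $\mathcal R^{(i,j)}_{\mathcal E}v=\sum_{\sigma\in\mathcal E^{(j)}_{\rm int}}(\mathcal R^{(i,j)}_{\mathcal E}v)_\sigma\mathbb 1_{D_\sigma}$, where $(\mathcal R^{(i,i)}_{\mathcal E}v)_\sigma=v_\sigma$ and, for $j\neq i$ and $\sigma=K|L\in\mathcal E^{(j)}_{\rm int}$, $(\mathcal R^{(i,j)}_{\mathcal E}v)_\sigma=\frac14\sum_{\sigma'\in\mathcal N_\sigma}v_{\sigma'}$ with $\mathcal N_\sigma=\{\sigma'\in\mathcal E^{(i)}:\sigma'\in\mathcal E(K)\cup\mathcal E(L)\}$. For $i\in\{1,2,3\}$ define $\mathcal R^{(i)}_{\mathcal M}:H^{(i)}_{\mathcal E}\to L_{\mathcal M}$ by $(\mathcal R^{(i)}_{\mathcal M}v)_K=\frac12\sum_{\sigma\in\mathcal E^{(i)}\cap\mathcal E(K)}v_\sigma$ on each $K$. Then there exists $C\ge0$, depending only on $\eta_{\mathcal M}$ and non-increasing with respect to it, such that for all $1\le q<\infty$ and all $i,j\in\{1,2,3\}$: $\|\mathcal R^{(i,j)}_{\mathcal E}v\|_{L^q(\Omega)}\le C\|v\|_{L^q(\Omega)}$ for all $v\in H^{(i)}_{\mathcal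 E,0}$, and $\|\mathcal R^{(i)}_{\mathcal M}v\|_{L^q(\Omega)}\le C\|v\|_{L^q(\Omega)}$ for all $v\in H^{(i)}_{\mathcal E}$.
   Context: MAC compatible domain: bounded connected open $\Omega$ whose closure is a finite union of closed rectangular parallelepipeds with faces orthogonal to the canonical basis $\boldsymbol e_1,\boldsymbol e_2,\boldsymbol e_3$. MAC grid: $\mathcal M$ a structured partition of $\Omega$ into rectangular parallelepipeds $K$; $\mathcal E$ the set of faces, $\mathcal E(K)$ the faces of $K$, $\mathcal E^{(i)}$ the faces orthogonal to $\boldsymbol e_i$ ($\mathcal E^{(i)}_{\rm int}$ interior ones); $\sigma=K|L$ the common face of $K,L$; $D_{K,\sigma}$ the half of $K$ adjacent to $\sigma$, dual cell $D_\sigma=D_{K,\sigma}\cup D_{L,\sigma}$ for $\sigma=K|L$, $D_\sigma=D_{K,\sigma}$ for boundary $\sigma$. $\boldsymbol x_\sigma$ mass centre of $\sigma$; $h_{\mathcal M}=\max_K\operatorname{diam}K$; $\eta_{\mathcal M}=\frac1{h_{\mathcal M}}\min_K\min_i\{|\boldsymbol x_\sigma-\boldsymbol x_{\sigma'}|:\sigma\ne\sigma'\in\mathcal E^{(i)}\cap\mathcal E(K)\}$. $L_{\mathcal M}$: functions constant on each cell. $H^{(i)}_{\mathcal E}$: functions constant on each $D_\sigma$, $\sigma\in\mathcal E^{(i)}$ (value $v_\sigma$); $H^{(i)}_{\mathcal E,0}$: those with $v_\sigma=0$ for boundary faces $\sigma$. *)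

theory Defs
  imports "HOL-Analysis.Analysis"
begin

text \<open>
  Structured MAC grid in R^3.  The coordinate axes are indexed by the type 3.
  For each axis d, x d is a strictly increasing sequence of grid coordinates.  A is the finite set of cells of the mesh M.
  A face is a pair (d, k): the face orthogonal to e_d lying in the hyperplane
  x_d = x d (k d), spanning the cell k in the other directions.
\<close>

type_synonym cidx = "3 \<Rightarrow> nat"
type_synonym face = "3 \<times> (3 \<Rightarrow> nat)"

definition cell :: "(3 \<Rightarrow> nat \<Rightarrow> real) \<Rightarrow> cidx \<Rightarrow> (real^3) set" where
  "cell x K = box (\<chi> d. x d (K d)) (\<chi> d. x d (Suc (K d)))"

definition cell_cl :: "(3 \<Rightarrow> nat \<Rightarrow> real) \<Rightarrow> cidx \<Rightarrow> (real^3) set" where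
  "cell_cl x K = cbox (\<chi> d. x d (K d)) (\<chi> d. x d (Suc (K d)))"

definition MAC_grid :: "(real^3) set \<Rightarrow> (3 \<Rightarrow> nat \<Rightarrow> real) \<Rightarrow> cidx set \<Rightarrow> bool" where
  "MAC_grid \<Omega> x A \<longleftrightarrow>
     (\<forall>d. strict_mono (x d)) \<and> finite A \<and> A \<noteq> {} \<and>
     \<Omega> = interior (\<Union>K\<in>A. cell_cl x K) \<and> connected \<Omega>"

definition cell_faces :: "cidx \<Rightarrow> face set" where
  "cell_faces K = {(d, K) | d. True} \<union> {(d, K(d := Suc (K d))) | d. True}"

definition faces :: "cidx set \<Rightarrow> face set" where
  "faces A = (\<Union>K\<in>A. cell_faces K)"

definition faces_dir :: "cidx set \<Rightarrow> 3 \<Rightarrow> face set" where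
  "faces_dir A i = {\<sigma> \<in> faces A. fst \<sigma> = i}"

definition int_faces_dir :: "cidx set \<Rightarrow> 3 \<Rightarrow> face set" where
  "int_faces_dir A i = {\<sigma> \<in> faces_dir A i.
      \<exists>K L. K \<in> A \<and> L \<in> A \<and> K \<noteq> L \<and> \<sigma> \<in> cell_faces K \<and> \<sigma> \<in> cell_faces L}"

definition half_cell :: "(3 \<Rightarrow> nat \<Rightarrow> real) \<Rightarrow> cidx \<Rightarrow> face \<Rightarrow> (real^3) set" where
  "half_cell x K \<sigma> = (case \<sigma> of (d, k) \<Rightarrow>
     (let mid = (x d (K d) + x d (Suc (K d))) / 2
      in if k = K
         then box (\<chi> e. x e (K e)) (\<chi> e. if e = d then mid else x e (Suc (K e)))
         else box (\<chi> e. if e = d then mid else x e (K e)) (\<chi> e. x e (Suc (K e)))))"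

definition dual_cell :: "(3 \<Rightarrow> nat \<Rightarrow> real) \<Rightarrow> cidx set \<Rightarrow> face \<Rightarrow> (real^3) set" where
  "dual_cell x A \<sigma> = (\<Union>K\<in>{K \<in> A. \<sigma> \<in> cell_faces K}. half_cell x K \<sigma>)"

definition fun_E :: "(3 \<Rightarrow> nat \<Rightarrow> real) \<Rightarrow> cidx set \<Rightarrow> 3 \<Rightarrow> (face \<Rightarrow> real) \<Rightarrow> real^3 \<Rightarrow> real" where
  "fun_E x A i v = (\<lambda>p. \<Sum>\<sigma>\<in>faces_dir A i. v \<sigma> * indicator (dual_cell x A \<sigma>) p)"

definition nbr_faces :: "cidx set \<Rightarrow> 3 \<Rightarrow> face \<Rightarrow> face set" where
  "nbr_faces A i \<sigma> = {\<sigma>' \<in> faces_dir A i. \<exists>K L. K \<in> A \<and> L \<in> A \<and> K \<noteq> L \<and>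
      \<sigma> \<in> cell_faces K \<and> \<sigma> \<in> cell_faces L \<and> \<sigma>' \<in> cell_faces K \<union> cell_faces L}"

definition R_EE_val :: "cidx set \<Rightarrow> 3 \<Rightarrow> 3 \<Rightarrow> (face \<Rightarrow> real) \<Rightarrow> face \<Rightarrow> real" where
  "R_EE_val A i j v \<sigma> = (if i = j then v \<sigma> else 1/4 * (\<Sum>\<sigma>'\<in>nbr_faces A i \<sigma>. v \<sigma>'))"

definition R_EE :: "(3 \<Rightarrow> nat \<Rightarrow> real) \<Rightarrow> cidx set \<Rightarrow> 3 \<Rightarrow> 3 \<Rightarrow> (face \<Rightarrow> real) \<Rightarrow> real^3 \<Rightarrow> real" where
  "R_EE x A i j v = (\<lambda>p. \<Sum>\<sigma>\<in>int_faces_dir A j. R_EE_val A i j v \<sigma> * indicator (dual_cell x A \<sigma>) p)"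

definition R_M :: "(3 \<Rightarrow> nat \<Rightarrow> real) \<Rightarrow> cidx set \<Rightarrow> 3 \<Rightarrow> (face \<Rightarrow> real) \<Rightarrow> real^3 \<Rightarrow> real" where
  "R_M x A i v = (\<lambda>p. \<Sum>K\<in>A. (1/2 * (\<Sum>\<sigma>\<in>faces_dir A i \<inter> cell_faces K. v \<sigma>)) * indicator (cell x K) p)"

definition Lq_norm :: "(real^3) set \<Rightarrow> real \<Rightarrow> (real^3 \<Rightarrow> real) \<Rightarrow> real" where
  "Lq_norm \<Omega> q f = (LINT p:\<Omega>|lborel. \<bar>f p\<bar> powr q) powr (1 / q)"

definition face_centre :: "(3 \<Rightarrow> nat \<Rightarrow> real) \<Rightarrow> face \<Rightarrow> real^3" where
  "face_centre x \<sigma> = (case \<sigma> of (d, k) \<Rightarrow>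
     (\<chi> e. if e = d then x d (k d) else (x e (k e) + x e (Suc (k e))) / 2))"

definition mesh_size :: "(3 \<Rightarrow> nat \<Rightarrow> real) \<Rightarrow> cidx set \<Rightarrow> real" where
  "mesh_size x A = Max ((\<lambda>K. diameter (cell x K)) ` A)"

definition eta :: "(3 \<Rightarrow> nat \<Rightarrow> real) \<Rightarrow> cidx set \<Rightarrow> real" where
  "eta x A = (1 / mesh_size x A) *
     Min {dist (face_centre x \<sigma>) (face_centre x \<sigma>') | K \<sigma> \<sigma>'.
            K \<in> A \<and> \<sigma> \<in> cell_faces K \<and> \<sigma>' \<in> cell_faces K \<and> fst \<sigma> = fst \<sigma>' \<and> \<sigma> \<noteq> \<sigma>'}"

end

theory Submission
  imports Defs
begin

text \<open>
  All functions involved are constant on pairwise disjoint boxes inside \<Omega> (cells or dual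
  cells), so the q-th power of each L^q norm is a finite sum of |value|^q times volume.
  A value of R_EE v or R_M v is 1/4 resp. 1/2 times a sum of at most 4 resp. 2 face values,
  hence its q-th power is at most the sum of their q-th powers, and each face value enters at
  most 4 such sums. Since all cell widths lie between \<eta> h and h, the boxes have volume at most
  2 h^3 and the dual cells volume at least (\<eta> h / 2)^3. So the q-th power of the norm of the
  interpolate is at most 8 h^3 \<Sum> |v \<sigma>|^q \<le> (64 / \<eta>^3) \<parallel>v\<parallel>^q, and since 64 / \<eta>^3 + 1 \<ge> 1
  this constant survives taking q-th roots.
\<close>

lemma set_integral_abs_powr_step_function:
  fixes D :: "'s \<Rightarrow> 'a::euclidean_space set" and c :: "'s \<Rightarrow> real"
  assumes "finite S" and fm: "\<And>s. s \<in> S \<Longrightarrow> D s \<in> fmeasurable lborel"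
    and sub: "\<And>s. s \<in> S \<Longrightarrow> D s \<subseteq> \<Omega>"
    and disj: "\<And>s t. s \<in> S \<Longrightarrow> t \<in> S \<Longrightarrow> s \<noteq> t \<Longrightarrow> D s \<inter> D t = {}"
    and "0 < q"
  shows "(LINT p:\<Omega>|lborel. \<bar>\<Sum>s\<in>S. c s * indicator (D s) p\<bar> powr q)
       = (\<Sum>s\<in>S. \<bar>c s\<bar> powr q * measure lborel (D s))"
proof -
  have pointwise: "indicator \<Omega> p *\<^sub>R \<bar>\<Sum>s\<in>S. c s * indicator (D s) p\<bar> powr q
      = (\<Sum>s\<in>S. \<bar>c s\<bar> powr q * indicator (D s) p)" for p
  proof (cases "\<exists>s\<in>S. p \<in> D s")
    case True
    then obtain s0 where s0: "s0 \<in> S" "p \<in> D s0" by blast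
    have other: "t \<in> S \<Longrightarrow> t \<noteq> s0 \<Longrightarrow> p \<notin> D t" for t using disj s0 by blast
    have "(\<Sum>s\<in>S. c s * indicator (D s) p) = (\<Sum>s\<in>S. if s = s0 then c s else 0)"
      "(\<Sum>s\<in>S. \<bar>c s\<bar> powr q * indicator (D s) p) = (\<Sum>s\<in>S. if s = s0 then \<bar>c s\<bar> powr q else 0)"
      by (rule sum.cong; use other s0 in auto)+
    moreover have "p \<in> \<Omega>" using sub s0 by blast
    ultimately show ?thesis using \<open>finite S\<close> s0 by simp
  next
    case False
    then show ?thesis by (simp add: sum.neutral)
  qed
  have "(LINT p:\<Omega>|lborel. \<bar>\<Sum>s\<in>S. c s * indicator (D s) p\<bar> powr q)
      = (LINT p|lborel. (\<Sum>s\<in>S. \<bar>c s\<bar> powr q * indicator (D s) p))"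
    unfolding set_lebesgue_integral_def pointwise ..
  also have "\<dots> = (\<Sum>s\<in>S. (LINT p|lborel. \<bar>c s\<bar> powr q * indicator (D s) p))"
    by (rule Bochner_Integration.integral_sum) (use fm in \<open>auto simp: fmeasurable_def\<close>)
  also have "\<dots> = (\<Sum>s\<in>S. \<bar>c s\<bar> powr q * measure lborel (D s))"
    by simp
  finally show ?thesis .
qed

lemma measure_lborel_box_cart:
  fixes a b :: "real^'n"
  assumes "\<And>i. a$i \<le> b$i"
  shows "measure lborel (box a b) = (\<Prod>i\<in>UNIV. b$i - a$i)"
proof -
  have "a \<in> cbox a b" using assms by (simp add: mem_box_cart)
  then have "cbox a b \<noteq> {}" by blast
  have "measure lborel (box a b) = measure lborel (cbox a b)"
    by (simp only: measure_lborel_box_eq measure_lborel_cbox_eq)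
  then show ?thesis using content_cbox_cart[OF \<open>cbox a b \<noteq> {}\<close>] by simp
qed

lemma card_le_length_if_subset_set: "S \<subseteq> set xs \<Longrightarrow> card S \<le> length xs"
  using card_mono[OF finite_set] card_length le_trans by blast

lemma abs_mean_powr_le_sum_powr:
  fixes a :: "'s \<Rightarrow> real"
  assumes fin: "finite N" and card: "real (card N) \<le> n" and "0 < n" and "1 \<le> q"
  shows "\<bar>1/n * (\<Sum>s\<in>N. a s)\<bar> powr q \<le> (\<Sum>s\<in>N. \<bar>a s\<bar> powr q)"
proof (cases "N = {}")
  case False
  define M where "M = Max ((\<lambda>s. \<bar>a s\<bar>) ` N)"
  have "M \<in> (\<lambda>s. \<bar>a s\<bar>) ` N" unfolding M_def using fin False by (intro Max_in) auto
  then obtain s0 where s0: "s0 \<in> N" "\<bar>a s0\<bar> = M" by auto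
  have le_M: "s \<in> N \<Longrightarrow> \<bar>a s\<bar> \<le> M" for s unfolding M_def using fin by auto
  have "\<bar>\<Sum>s\<in>N. a s\<bar> \<le> (\<Sum>s\<in>N. M)"
    using sum_abs[of a N] sum_mono[of N "\<lambda>s. \<bar>a s\<bar>" "\<lambda>_. M"] le_M by (meson order_trans)
  also have "\<dots> \<le> n * M" using card s0 by (simp add: mult_right_mono)
  finally have "\<bar>1/n * (\<Sum>s\<in>N. a s)\<bar> \<le> \<bar>a s0\<bar>" using s0 \<open>0 < n\<close> by (simp add: abs_mult field_simps)
  then have "\<bar>1/n * (\<Sum>s\<in>N. a s)\<bar> powr q \<le> \<bar>a s0\<bar> powr q" using \<open>1 \<le> q\<close> by (intro powr_mono2) auto
  also have "\<dots> \<le> (\<Sum>s\<in>N. \<bar>a s\<bar> powr q)" by (rule member_le_sum) (use s0 fin in auto)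
  finally show ?thesis .
qed simp

lemma sum_sum_le_mult_sum_if_card_le:
  fixes g :: "'f \<Rightarrow> real" and N :: "'s \<Rightarrow> 'f set"
  assumes S: "finite S" and F: "finite F" and sub: "\<And>s. s \<in> S \<Longrightarrow> N s \<subseteq> F"
    and card: "\<And>f. f \<in> F \<Longrightarrow> real (card {s\<in>S. f \<in> N s}) \<le> m"
    and nonneg: "\<And>f. f \<in> F \<Longrightarrow> 0 \<le> g f"
  shows "(\<Sum>s\<in>S. \<Sum>f\<in>N s. g f) \<le> m * (\<Sum>f\<in>F. g f)"
proof -
  have "(\<Sum>s\<in>S. \<Sum>f\<in>N s. g f) = (\<Sum>s\<in>S. \<Sum>f\<in>{f. f \<in> F \<and> f \<in> N s}. g f)"
    by (rule sum.cong) (use sub in \<open>auto intro!: arg_cong[where f = "sum g"]\<close>)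
  also have "\<dots> = (\<Sum>f\<in>F. real (card {s\<in>S. f \<in> N s}) * g f)"
    by (simp add: sum.swap_restrict[OF S F])
  also have "\<dots> \<le> (\<Sum>f\<in>F. m * g f)"
    by (rule sum_mono) (use card nonneg in \<open>auto intro: mult_right_mono\<close>)
  finally show ?thesis by (simp add: sum_distrib_left)
qed

lemma powr_inverse_le_mult_powr_inverse:
  fixes X Y M q :: real
  assumes "0 \<le> X" "0 \<le> Y" "X \<le> M * Y" "1 \<le> M" "1 \<le> q"
  shows "X powr (1/q) \<le> M * Y powr (1/q)"
proof -
  have "X powr (1/q) \<le> M powr (1/q) * Y powr (1/q)"
    using assms powr_mono2[of "1/q" X "M * Y"] by (simp add: powr_mult)
  also have "M powr (1/q) \<le> M powr 1" using assms by (intro powr_mono) auto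
  finally show ?thesis using assms by (simp add: mult_right_mono)
qed

lemma power_card_le_prod_le_power_card:
  fixes f :: "'i \<Rightarrow> real"
  assumes "\<And>i. i \<in> I \<Longrightarrow> a \<le> f i" "\<And>i. i \<in> I \<Longrightarrow> f i \<le> b" "0 \<le> a"
  shows "a ^ card I \<le> prod f I" "prod f I \<le> b ^ card I"
proof -
  have "prod (\<lambda>_. a) I \<le> prod f I" by (rule prod_mono) (use assms in auto)
  then show "a ^ card I \<le> prod f I" by (simp add: prod_constant)
  have "prod f I \<le> prod (\<lambda>_. b) I" by (rule prod_mono) (meson assms order_trans)
  then show "prod f I \<le> b ^ card I" by (simp add: prod_constant)
qed

lemma mem_cell_faces_iff: "(d, k) \<in> cell_faces K \<longleftrightarrow> k = K \<or> k = K(d := Suc (K d))"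
  unfolding cell_faces_def by auto

lemma cell_of_mem_cell_faces: "(d, k) \<in> cell_faces K \<Longrightarrow> K = k \<or> K = k(d := k d - 1)"
  unfolding mem_cell_faces_iff by auto

lemma fun_upd_Suc_neq: "K(d := Suc (K d)) \<noteq> K"
  by (metis fun_upd_same n_not_Suc_n)

lemma finite_cell_faces: "finite (cell_faces K)"
proof -
  have "cell_faces K = (\<lambda>d. (d, K)) ` UNIV \<union> (\<lambda>d. (d, K(d := Suc (K d)))) ` UNIV"
    unfolding cell_faces_def by auto
  then show ?thesis by simp
qed

lemma finite_faces_dir: "finite A \<Longrightarrow> finite (faces_dir A i)"
  unfolding faces_dir_def faces_def using finite_cell_faces by auto

lemma finite_cells_with_face: "finite {K\<in>A. (d, k) \<in> cell_faces K}"
  and card_cells_with_face_le: "card {K\<in>A. (d, k) \<in> cell_faces K} \<le> 2"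
proof -
  have sub: "{K\<in>A. (d, k) \<in> cell_faces K} \<subseteq> set [k, k(d := k d - 1)]"
    using cell_of_mem_cell_faces by auto
  show "finite {K\<in>A. (d, k) \<in> cell_faces K}" using sub by (rule finite_subset) simp
  show "card {K\<in>A. (d, k) \<in> cell_faces K} \<le> 2"
    using card_le_length_if_subset_set[OF sub] by simp
qed

lemma finite_faces_dir_Int_cell_faces: "finite (faces_dir A i \<inter> cell_faces K)"
  and card_faces_dir_Int_cell_faces_le: "card (faces_dir A i \<inter> cell_faces K) \<le> 2"
proof -
  have sub: "faces_dir A i \<inter> cell_faces K \<subseteq> set [(i, K), (i, K(i := Suc (K i)))]"
    unfolding faces_dir_def by (auto simp: mem_cell_faces_iff)
  show "finite (faces_dir A i \<inter> cell_faces K)" using sub by (rule finite_subset) simp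
  show "card (faces_dir A i \<inter> cell_faces K) \<le> 2"
    using card_le_length_if_subset_set[OF sub] by simp
qed

text \<open>
  The four candidates: one of the two cells of (j, k), then one of that cell's two faces in
  direction i.
\<close>

lemma faces_sharing_cell_subset:
  assumes "(j, k) \<in> cell_faces K" "(i, k') \<in> cell_faces K"
  shows "(i, k') \<in> set [(i, k), (i, k(i := Suc (k i))), (i, k(j := k j - 1)),
                         (i, (k(j := k j - 1))(i := Suc ((k(j := k j - 1)) i)))]"
proof -
  have "K = k \<or> K = k(j := k j - 1)" by (rule cell_of_mem_cell_faces[OF assms(1)])
  moreover have "k' = K \<or> k' = K(i := Suc (K i))" using assms(2) by (simp add: mem_cell_faces_iff)
  ultimately show ?thesis by (elim disjE) simp_all
qed

lemma finite_nbr_faces: "finite (nbr_faces A i (j, k))"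
  and card_nbr_faces_le: "card (nbr_faces A i (j, k)) \<le> 4"
proof -
  have sub: "nbr_faces A i (j, k) \<subseteq> set [(i, k), (i, k(i := Suc (k i))), (i, k(j := k j - 1)),
                         (i, (k(j := k j - 1))(i := Suc ((k(j := k j - 1)) i)))]"
  proof
    fix s assume "s \<in> nbr_faces A i (j, k)"
    then obtain k' K where s_eq: "s = (i, k')"
      and shared: "(j, k) \<in> cell_faces K" "(i, k') \<in> cell_faces K"
      unfolding nbr_faces_def faces_dir_def by (cases s) auto
    show "s \<in> set [(i, k), (i, k(i := Suc (k i))), (i, k(j := k j - 1)),
                         (i, (k(j := k j - 1))(i := Suc ((k(j := k j - 1)) i)))]"
      unfolding s_eq by (rule faces_sharing_cell_subset[OF shared])
  qed
  show "finite (nbr_faces A i (j, k))" using sub by (rule finite_subset) simp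
  show "card (nbr_faces A i (j, k)) \<le> 4"
    using card_le_length_if_subset_set[OF sub] by simp
qed

lemma card_int_faces_with_nbr_face_le:
  "card {\<sigma>\<in>int_faces_dir A j. (i, k') \<in> nbr_faces A i \<sigma>} \<le> 4"
proof -
  have "{\<sigma>\<in>int_faces_dir A j. (i, k') \<in> nbr_faces A i \<sigma>} \<subseteq>
     set [(j, k'), (j, k'(j := Suc (k' j))), (j, k'(i := k' i - 1)),
          (j, (k'(i := k' i - 1))(j := Suc ((k'(i := k' i - 1)) j)))]"
  proof
    fix s assume "s \<in> {\<sigma>\<in>int_faces_dir A j. (i, k') \<in> nbr_faces A i \<sigma>}"
    then obtain k K where s_eq: "s = (j, k)"
      and shared: "(j, k) \<in> cell_faces K" "(i, k') \<in> cell_faces K"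
      unfolding int_faces_dir_def faces_dir_def nbr_faces_def by (cases s) auto
    show "s \<in> set [(j, k'), (j, k'(j := Suc (k' j))), (j, k'(i := k' i - 1)),
          (j, (k'(i := k' i - 1))(j := Suc ((k'(i := k' i - 1)) j)))]"
      unfolding s_eq by (rule faces_sharing_cell_subset[OF shared(2,1)])
  qed
  from card_le_length_if_subset_set[OF this] show ?thesis by simp
qed

lemma MAC_gridD:
  assumes "MAC_grid \<Omega> x A"
  shows "\<And>d. strict_mono (x d)" "finite A" "A \<noteq> {}"
    "\<Omega> = interior (\<Union>K\<in>A. cell_cl x K)"
  using assms unfolding MAC_grid_def by auto

lemma cell_width_le_diameter:
  assumes mono: "\<And>e. strict_mono (x e)"
  shows "x d (Suc (K d)) - x d (K d) \<le> diameter (cell x K)"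
proof -
  let ?a = "(\<chi> e. x e (K e)) :: real^3" and ?b = "(\<chi> e. x e (Suc (K e))) :: real^3"
  have lt: "x e (K e) < x e (Suc (K e))" for e using strict_monoD[OF mono lessI] .
  then have "((\<chi> e. (x e (K e) + x e (Suc (K e))) / 2) :: real^3) \<in> box ?a ?b"
    by (simp add: mem_box_cart)
  then have "box ?a ?b \<noteq> {}" by blast
  have "x d (Suc (K d)) - x d (K d) = \<bar>(?a - ?b)$d\<bar>" using lt[of d] by simp
  also have "\<dots> \<le> dist ?a ?b" unfolding dist_norm by (rule component_le_norm_cart)
  also have "\<dots> \<le> diameter (cbox ?a ?b)"
    by (rule diameter_bounded_bound) (use lt in \<open>auto simp: mem_box_cart less_imp_le\<close>)
  also have "\<dots> = diameter (cell x K)"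
    unfolding cell_def using diameter_closure[of "box ?a ?b"] \<open>box ?a ?b \<noteq> {}\<close> by simp
  finally show ?thesis .
qed

lemma cell_width_le_mesh_size:
  assumes G: "MAC_grid \<Omega> x A" and "K \<in> A"
  shows "x d (Suc (K d)) - x d (K d) \<le> mesh_size x A"
proof -
  have "diameter (cell x K) \<le> mesh_size x A"
    unfolding mesh_size_def using MAC_gridD(2)[OF G] \<open>K \<in> A\<close> by (intro Max_ge) auto
  then show ?thesis
    using cell_width_le_diameter[where x = x and d = d and K = K, OF MAC_gridD(1)[OF G]] by linarith
qed

lemma mesh_size_pos:
  assumes G: "MAC_grid \<Omega> x A"
  shows "0 < mesh_size x A"
proof -
  obtain K where "K \<in> A" using MAC_gridD(3)[OF G] by blast
  then show ?thesis
    using cell_width_le_mesh_size[OF G, where d = 0]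
      strict_monoD[OF MAC_gridD(1)[OF G] lessI, of 0 "K 0"] by fastforce
qed

definition face_centre_gaps :: "(3 \<Rightarrow> nat \<Rightarrow> real) \<Rightarrow> cidx set \<Rightarrow> real set" where
  "face_centre_gaps x A = {dist (face_centre x \<sigma>) (face_centre x \<sigma>') | K \<sigma> \<sigma>'.
     K \<in> A \<and> \<sigma> \<in> cell_faces K \<and> \<sigma>' \<in> cell_faces K \<and> fst \<sigma> = fst \<sigma>' \<and> \<sigma> \<noteq> \<sigma>'}"

lemma eta_eq_Min_face_centre_gaps: "eta x A = Min (face_centre_gaps x A) / mesh_size x A"
  unfolding eta_def face_centre_gaps_def by simp

lemma finite_face_centre_gaps:
  assumes "finite A"
  shows "finite (face_centre_gaps x A)"
proof -
  have "face_centre_gaps x A \<subseteq> (\<lambda>(K, \<sigma>, \<sigma>'). dist (face_centre x \<sigma>) (face_centre x \<sigma>')) `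
      (SIGMA K:A. cell_faces K \<times> cell_faces K)"
    unfolding face_centre_gaps_def by force
  moreover have "finite (SIGMA K:A. cell_faces K \<times> cell_faces K)"
    using assms finite_cell_faces by auto
  ultimately show ?thesis by (meson finite_surj)
qed

lemma face_centre_gaps_pos:
  assumes mono: "\<And>d. strict_mono (x d)" and "t \<in> face_centre_gaps x A"
  shows "0 < t"
proof -
  obtain K \<sigma> \<sigma>' where t: "t = dist (face_centre x \<sigma>) (face_centre x \<sigma>')"
    and \<sigma>: "\<sigma> \<in> cell_faces K" "\<sigma>' \<in> cell_faces K" "fst \<sigma> = fst \<sigma>'" "\<sigma> \<noteq> \<sigma>'"
    using assms(2) unfolding face_centre_gaps_def by blast
  obtain d k k' where dk: "\<sigma> = (d, k)" "\<sigma>' = (d, k')" using \<sigma>(3) by (cases \<sigma>, cases \<sigma>') auto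
  have "k d \<noteq> k' d" using \<sigma> dk by (auto simp: mem_cell_faces_iff fun_upd_Suc_neq)
  then have "x d (k d) \<noteq> x d (k' d)" using mono strict_mono_eq by metis
  moreover have "face_centre x (d, l) $ d = x d (l d)" for l by (simp add: face_centre_def)
  ultimately have "face_centre x \<sigma> \<noteq> face_centre x \<sigma>'" using dk by metis
  then show ?thesis using t by simp
qed

lemma face_centre_gap_le_cell_width:
  assumes mono: "\<And>d. strict_mono (x d)" and "K \<in> A"
  shows "\<exists>t\<in>face_centre_gaps x A. t \<le> x d (Suc (K d)) - x d (K d)"
proof
  let ?\<sigma> = "(d, K)" and ?\<sigma>' = "(d, K(d := Suc (K d)))"
  show "dist (face_centre x ?\<sigma>) (face_centre x ?\<sigma>') \<in> face_centre_gaps x A"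
    unfolding face_centre_gaps_def using \<open>K \<in> A\<close> fun_upd_Suc_neq[of K d]
    by (force simp: mem_cell_faces_iff)
  have "dist (face_centre x ?\<sigma>) (face_centre x ?\<sigma>')
      \<le> (\<Sum>e\<in>UNIV. \<bar>(face_centre x ?\<sigma> - face_centre x ?\<sigma>')$e\<bar>)"
    unfolding dist_norm by (rule norm_le_l1_cart)
  also have "\<dots> = (\<Sum>e\<in>UNIV. if e = d then x d (Suc (K d)) - x d (K d) else 0)"
    by (rule sum.cong) (use strict_monoD[OF mono lessI, of d "K d"] in \<open>auto simp: face_centre_def\<close>)
  finally show "dist (face_centre x ?\<sigma>) (face_centre x ?\<sigma>') \<le> x d (Suc (K d)) - x d (K d)"
    by simp
qed

lemma eta_pos:
  assumes G: "MAC_grid \<Omega> x A"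
  shows "0 < eta x A"
proof -
  note mono = MAC_gridD(1)[OF G]
  obtain K where "K \<in> A" using MAC_gridD(3)[OF G] by blast
  then have "face_centre_gaps x A \<noteq> {}"
    using face_centre_gap_le_cell_width[where x = x and d = 0, OF mono] by blast
  then have "Min (face_centre_gaps x A) \<in> face_centre_gaps x A"
    using finite_face_centre_gaps[OF MAC_gridD(2)[OF G]] by (rule Min_in[rotated])
  then show ?thesis
    unfolding eta_eq_Min_face_centre_gaps
    using face_centre_gaps_pos[where x = x, OF mono] mesh_size_pos[OF G] by simp
qed

lemma eta_mesh_size_le_cell_width:
  assumes G: "MAC_grid \<Omega> x A" and "K \<in> A"
  shows "eta x A * mesh_size x A \<le> x d (Suc (K d)) - x d (K d)"
proof -
  obtain t where "t \<in> face_centre_gaps x A" "t \<le> x d (Suc (K d)) - x d (K d)"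
    using face_centre_gap_le_cell_width[where x = x, OF MAC_gridD(1)[OF G] \<open>K \<in> A\<close>] by blast
  then have "Min (face_centre_gaps x A) \<le> x d (Suc (K d)) - x d (K d)"
    using Min_le[OF finite_face_centre_gaps[OF MAC_gridD(2)[OF G]]] by fastforce
  then show ?thesis unfolding eta_eq_Min_face_centre_gaps using mesh_size_pos[OF G] by simp
qed

lemma measure_cell:
  assumes mono: "\<And>d. strict_mono (x d)"
  shows "measure lborel (cell x K) = (\<Prod>d\<in>UNIV. x d (Suc (K d)) - x d (K d))"
  unfolding cell_def
  by (subst measure_lborel_box_cart) (use strict_monoD[OF mono lessI] in \<open>auto simp: less_imp_le\<close>)

lemma measure_half_cell:
  assumes mono: "\<And>d. strict_mono (x d)"
  shows "measure lborel (half_cell x K (d, k))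
       = (\<Prod>e\<in>UNIV. (if e = d then 1/2 else 1) * (x e (Suc (K e)) - x e (K e)))"
proof -
  have lt: "x e (K e) < x e (Suc (K e))" for e using strict_monoD[OF mono lessI] .
  show ?thesis unfolding half_cell_def
    by (cases "k = K"; simp add: Let_def, subst measure_lborel_box_cart)
       (use lt in \<open>auto intro!: prod.cong simp: less_imp_le field_simps\<close>)
qed

lemma measure_cell_le:
  assumes G: "MAC_grid \<Omega> x A" and "K \<in> A"
  shows "measure lborel (cell x K) \<le> mesh_size x A ^ 3"
  unfolding measure_cell[OF MAC_gridD(1)[OF G]]
  using power_card_le_prod_le_power_card(2)[where I = UNIV and a = 0
      and f = "\<lambda>d. x d (Suc (K d)) - x d (K d)" and b = "mesh_size x A"]
    cell_width_le_mesh_size[OF G \<open>K \<in> A\<close>] strict_monoD[OF MAC_gridD(1)[OF G] lessI]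
  by (simp add: less_imp_le)

lemma measure_half_cell_bounds:
  assumes G: "MAC_grid \<Omega> x A" and "K \<in> A"
  shows "(eta x A * mesh_size x A / 2) ^ 3 \<le> measure lborel (half_cell x K (d, k))"
    and "measure lborel (half_cell x K (d, k)) \<le> mesh_size x A ^ 3"
proof -
  define f where "f e = (if e = d then 1/2 else 1) * (x e (Suc (K e)) - x e (K e))" for e
  have "0 \<le> eta x A * mesh_size x A" using eta_pos[OF G] mesh_size_pos[OF G] by simp
  moreover have "eta x A * mesh_size x A / 2 \<le> f e" "f e \<le> mesh_size x A" for e
    using eta_mesh_size_le_cell_width[OF G \<open>K \<in> A\<close>, of e] cell_width_le_mesh_size[OF G \<open>K \<in> A\<close>, of e]
      \<open>0 \<le> eta x A * mesh_size x A\<close> unfolding f_def by auto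
  ultimately show "(eta x A * mesh_size x A / 2) ^ 3 \<le> measure lborel (half_cell x K (d, k))"
    and "measure lborel (half_cell x K (d, k)) \<le> mesh_size x A ^ 3"
    using power_card_le_prod_le_power_card[where I = UNIV and a = "eta x A * mesh_size x A / 2"
      and f = f and b = "mesh_size x A"]
    unfolding measure_half_cell[OF MAC_gridD(1)[OF G]] f_def by simp_all
qed

lemma half_cell_subset_cell:
  assumes mono: "\<And>d. strict_mono (x d)"
  shows "half_cell x K \<sigma> \<subseteq> cell x K"
proof
  fix p assume p: "p \<in> half_cell x K \<sigma>"
  obtain d k where \<sigma>: "\<sigma> = (d, k)" by fastforce
  have lt: "x e (K e) < x e (Suc (K e))" for e using strict_monoD[OF mono lessI] .
  have "x e (K e) < p $ e \<and> p $ e < x e (Suc (K e))" for e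
    using p lt[of e] lt[of d] unfolding \<sigma> half_cell_def Let_def
    by (cases "k = K"; cases "e = d") (auto simp: mem_box_cart dest!: spec[of _ e])
  then show "p \<in> cell x K" unfolding cell_def by (simp add: mem_box_cart)
qed

lemma half_cell_fmeasurable: "half_cell x K \<sigma> \<in> fmeasurable lborel"
  unfolding half_cell_def by (auto simp: Let_def split: prod.splits)

lemma half_cell_sets: "half_cell x K \<sigma> \<in> sets lborel"
  using half_cell_fmeasurable by (rule fmeasurableD)

lemma cell_subset_domain:
  assumes G: "MAC_grid \<Omega> x A" and "K \<in> A"
  shows "cell x K \<subseteq> \<Omega>"
proof -
  have "cell x K \<subseteq> (\<Union>K\<in>A. cell_cl x K)"
    using \<open>K \<in> A\<close> box_subset_cbox unfolding cell_def cell_cl_def by blast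
  moreover have "open (cell x K)" unfolding cell_def by (rule open_box)
  ultimately show ?thesis unfolding MAC_gridD(4)[OF G] using interior_maximal by blast
qed

lemma disjoint_cells:
  assumes mono: "\<And>d. strict_mono (x d)" and "K \<noteq> L"
  shows "cell x K \<inter> cell x L = {}"
proof (rule ccontr)
  assume "cell x K \<inter> cell x L \<noteq> {}"
  then obtain p where p: "p \<in> cell x K" "p \<in> cell x L" by blast
  obtain e where "K e \<noteq> L e" using \<open>K \<noteq> L\<close> by blast
  have "x e (K e) < p$e" "p$e < x e (Suc (K e))" "x e (L e) < p$e" "p$e < x e (Suc (L e))"
    using p unfolding cell_def by (auto simp: mem_box_cart)
  moreover have "x e (Suc (K e)) \<le> x e (L e) \<or> x e (Suc (L e)) \<le> x e (K e)"
    using \<open>K e \<noteq> L e\<close> mono[of e] by (auto simp: strict_mono_less_eq Suc_leI nat_neq_iff)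
  ultimately show False by linarith
qed

lemma disjoint_half_cells: "half_cell x K (d, K) \<inter> half_cell x K (d, K(d := Suc (K d))) = {}"
proof -
  let ?m = "(x d (K d) + x d (Suc (K d))) / 2"
  have "p $ d < ?m" if "p \<in> half_cell x K (d, K)" for p
    using that unfolding half_cell_def Let_def by (auto simp: mem_box_cart dest!: spec[of _ d])
  moreover have "?m < p $ d" if "p \<in> half_cell x K (d, K(d := Suc (K d)))" for p
    using that fun_upd_Suc_neq[of K d] unfolding half_cell_def Let_def
    by (auto simp: mem_box_cart dest!: spec[of _ d])
  ultimately show ?thesis by fastforce
qed

lemma disjoint_dual_cells:
  assumes mono: "\<And>d. strict_mono (x d)"
    and "\<sigma> \<in> faces_dir A i" "\<sigma>' \<in> faces_dir A i" "\<sigma> \<noteq> \<sigma>'"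
  shows "dual_cell x A \<sigma> \<inter> dual_cell x A \<sigma>' = {}"
proof (rule ccontr)
  assume "dual_cell x A \<sigma> \<inter> dual_cell x A \<sigma>' \<noteq> {}"
  then obtain p K K' where K: "p \<in> half_cell x K \<sigma>" "\<sigma> \<in> cell_faces K"
    and K': "p \<in> half_cell x K' \<sigma>'" "\<sigma>' \<in> cell_faces K'"
    unfolding dual_cell_def by blast
  obtain k k' where k: "\<sigma> = (i, k)" "\<sigma>' = (i, k')"
    using assms(2,3) unfolding faces_dir_def by (cases \<sigma>, cases \<sigma>') auto
  have "K = K'"
    using half_cell_subset_cell[where x = x, OF mono] disjoint_cells[where x = x, OF mono] K(1) K'(1)
    by blast
  then have "{k, k'} = {K, K(i := Suc (K i))}"
    using K(2) K'(2) assms(4) k by (auto simp: mem_cell_faces_iff)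
  then have "{half_cell x K \<sigma>, half_cell x K \<sigma>'}
      = {half_cell x K (i, K), half_cell x K (i, K(i := Suc (K i)))}"
    using k by (auto simp: doubleton_eq_iff)
  then show False
    using K(1) K'(1) \<open>K = K'\<close> disjoint_half_cells[of x K i] by (auto simp: doubleton_eq_iff)
qed

lemma dual_cell_fmeasurable:
  assumes "finite A"
  shows "dual_cell x A \<sigma> \<in> fmeasurable lborel"
  unfolding dual_cell_def using assms half_cell_fmeasurable by (intro fmeasurable.finite_UN) auto

lemma dual_cell_subset_domain:
  assumes G: "MAC_grid \<Omega> x A"
  shows "dual_cell x A \<sigma> \<subseteq> \<Omega>"
  unfolding dual_cell_def
  using cell_subset_domain[OF G] half_cell_subset_cell[where x = x, OF MAC_gridD(1)[OF G]] by blast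

lemma measure_dual_cell_le:
  assumes G: "MAC_grid \<Omega> x A" and "\<sigma> \<in> faces_dir A i"
  shows "measure lborel (dual_cell x A \<sigma>) \<le> 2 * mesh_size x A ^ 3"
proof -
  obtain k where k: "\<sigma> = (i, k)" using assms(2) unfolding faces_dir_def by (cases \<sigma>) auto
  define C where "C = {K\<in>A. \<sigma> \<in> cell_faces K}"
  have "finite C" unfolding C_def k by (rule finite_cells_with_face)
  have "measure lborel (dual_cell x A \<sigma>) \<le> (\<Sum>K\<in>C. measure lborel (half_cell x K \<sigma>))"
    unfolding dual_cell_def C_def[symmetric]
    by (rule measure_UNION_le) (use \<open>finite C\<close> half_cell_sets in auto)
  also have "\<dots> \<le> (\<Sum>K\<in>C. mesh_size x A ^ 3)"
    by (rule sum_mono) (use measure_half_cell_bounds(2)[OF G] k in \<open>auto simp: C_def\<close>)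
  also have "\<dots> \<le> 2 * mesh_size x A ^ 3"
    using card_cells_with_face_le[of A i k] mesh_size_pos[OF G] unfolding C_def k
    by (simp add: mult_right_mono)
  finally show ?thesis .
qed

lemma measure_dual_cell_ge:
  assumes G: "MAC_grid \<Omega> x A" and "\<sigma> \<in> faces_dir A i"
  shows "(eta x A * mesh_size x A / 2) ^ 3 \<le> measure lborel (dual_cell x A \<sigma>)"
proof -
  obtain k where k: "\<sigma> = (i, k)" using assms(2) unfolding faces_dir_def by (cases \<sigma>) auto
  obtain K where K: "K \<in> A" "\<sigma> \<in> cell_faces K"
    using assms(2) unfolding faces_dir_def faces_def by blast
  have "(eta x A * mesh_size x A / 2) ^ 3 \<le> measure lborel (half_cell x K \<sigma>)"
    using measure_half_cell_bounds(1)[OF G K(1)] k by simp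
  also have "\<dots> \<le> measure lborel (dual_cell x A \<sigma>)"
    by (rule measure_mono_fmeasurable[OF _ _ dual_cell_fmeasurable[OF MAC_gridD(2)[OF G]]])
       (use K half_cell_sets in \<open>auto simp: dual_cell_def\<close>)
  finally show ?thesis .
qed

lemma set_integral_abs_powr_dual_cell_step_function:
  assumes G: "MAC_grid \<Omega> x A" and "S \<subseteq> faces_dir A i" and "0 < q"
  shows "(LINT p:\<Omega>|lborel. \<bar>\<Sum>\<sigma>\<in>S. c \<sigma> * indicator (dual_cell x A \<sigma>) p\<bar> powr q)
       = (\<Sum>\<sigma>\<in>S. \<bar>c \<sigma>\<bar> powr q * measure lborel (dual_cell x A \<sigma>))"
proof (rule set_integral_abs_powr_step_function)
  show "finite S" using assms(2) finite_faces_dir[OF MAC_gridD(2)[OF G]] by (rule finite_subset)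
  show "dual_cell x A \<sigma> \<in> fmeasurable lborel" for \<sigma>
    by (rule dual_cell_fmeasurable[OF MAC_gridD(2)[OF G]])
  show "dual_cell x A \<sigma> \<subseteq> \<Omega>" for \<sigma> by (rule dual_cell_subset_domain[OF G])
  show "dual_cell x A \<sigma> \<inter> dual_cell x A \<sigma>' = {}" if "\<sigma> \<in> S" "\<sigma>' \<in> S" "\<sigma> \<noteq> \<sigma>'" for \<sigma> \<sigma>'
    using disjoint_dual_cells[where x = x, OF MAC_gridD(1)[OF G]] assms(2) that by blast
qed fact

lemma Lq_norm_fun_E:
  assumes "MAC_grid \<Omega> x A" and "0 < q"
  shows "Lq_norm \<Omega> q (fun_E x A i v)
       = (\<Sum>\<sigma>\<in>faces_dir A i. \<bar>v \<sigma>\<bar> powr q * measure lborel (dual_cell x A \<sigma>)) powr (1/q)"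
  unfolding Lq_norm_def fun_E_def
  using set_integral_abs_powr_dual_cell_step_function[OF assms(1) order_refl assms(2)] by simp

lemma Lq_norm_R_EE:
  assumes "MAC_grid \<Omega> x A" and "0 < q"
  shows "Lq_norm \<Omega> q (R_EE x A i j v)
       = (\<Sum>\<sigma>\<in>int_faces_dir A j. \<bar>R_EE_val A i j v \<sigma>\<bar> powr q * measure lborel (dual_cell x A \<sigma>))
         powr (1/q)"
proof -
  have "int_faces_dir A j \<subseteq> faces_dir A j" unfolding int_faces_dir_def by blast
  then show ?thesis unfolding Lq_norm_def R_EE_def
    using set_integral_abs_powr_dual_cell_step_function[OF assms(1) _ assms(2)] by simp
qed

lemma Lq_norm_R_M:
  assumes G: "MAC_grid \<Omega> x A" and "0 < q"
  shows "Lq_norm \<Omega> q (R_M x A i v)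
       = (\<Sum>K\<in>A. \<bar>1/2 * (\<Sum>\<sigma>\<in>faces_dir A i \<inter> cell_faces K. v \<sigma>)\<bar> powr q * measure lborel (cell x K))
         powr (1/q)"
proof -
  have "(LINT p:\<Omega>|lborel. \<bar>R_M x A i v p\<bar> powr q)
      = (\<Sum>K\<in>A. \<bar>1/2 * (\<Sum>\<sigma>\<in>faces_dir A i \<inter> cell_faces K. v \<sigma>)\<bar> powr q * measure lborel (cell x K))"
    unfolding R_M_def
  proof (rule set_integral_abs_powr_step_function[OF MAC_gridD(2)[OF G] _ _ _ \<open>0 < q\<close>])
    show "cell x K \<in> fmeasurable lborel" for K unfolding cell_def by simp
    show "K \<in> A \<Longrightarrow> cell x K \<subseteq> \<Omega>" for K by (rule cell_subset_domain[OF G])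
    show "K \<noteq> L \<Longrightarrow> cell x K \<inter> cell x L = {}" for K L
      by (rule disjoint_cells[where x = x, OF MAC_gridD(1)[OF G]])
  qed
  then show ?thesis unfolding Lq_norm_def by simp
qed

lemma power_mult_sum_le_weighted_sum_dual_cells:
  assumes G: "MAC_grid \<Omega> x A"
  shows "(eta x A * mesh_size x A / 2) ^ 3 * (\<Sum>\<sigma>\<in>faces_dir A i. \<bar>v \<sigma>\<bar> powr q)
       \<le> (\<Sum>\<sigma>\<in>faces_dir A i. \<bar>v \<sigma>\<bar> powr q * measure lborel (dual_cell x A \<sigma>))"
  unfolding sum_distrib_left
  by (rule sum_mono) (use measure_dual_cell_ge[OF G] in \<open>auto simp: mult.commute mult_left_mono\<close>)

lemma weighted_sum_R_EE_le:
  assumes G: "MAC_grid \<Omega> x A" and "1 \<le> q"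
  shows "(\<Sum>\<sigma>\<in>int_faces_dir A j. \<bar>R_EE_val A i j v \<sigma>\<bar> powr q * measure lborel (dual_cell x A \<sigma>))
       \<le> 8 * mesh_size x A ^ 3 * (\<Sum>\<sigma>\<in>faces_dir A i. \<bar>v \<sigma>\<bar> powr q)"
    (is "?X \<le> 8 * ?h3 * ?S")
proof -
  have "int_faces_dir A j \<subseteq> faces_dir A j" unfolding int_faces_dir_def by blast
  then have fin: "finite (int_faces_dir A j)" "finite (faces_dir A i)"
    using finite_faces_dir[OF MAC_gridD(2)[OF G]] finite_subset by blast+
  have h3: "0 \<le> ?h3" using mesh_size_pos[OF G] by simp
  have S: "0 \<le> ?S" by (simp add: sum_nonneg)
  have "?X \<le> (\<Sum>\<sigma>\<in>int_faces_dir A j. \<bar>R_EE_val A i j v \<sigma>\<bar> powr q * (2 * ?h3))"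
    by (rule sum_mono, rule mult_left_mono)
      (use measure_dual_cell_le[OF G] \<open>int_faces_dir A j \<subseteq> faces_dir A j\<close> in auto)
  also have "\<dots> = 2 * ?h3 * (\<Sum>\<sigma>\<in>int_faces_dir A j. \<bar>R_EE_val A i j v \<sigma>\<bar> powr q)"
    by (simp add: sum_distrib_left mult.commute)
  also have "\<dots> \<le> 2 * ?h3 * (4 * ?S)"
  proof (rule mult_left_mono)
    show "(\<Sum>\<sigma>\<in>int_faces_dir A j. \<bar>R_EE_val A i j v \<sigma>\<bar> powr q) \<le> 4 * ?S"
    proof (cases "i = j")
      case True
      have "(\<Sum>\<sigma>\<in>int_faces_dir A j. \<bar>v \<sigma>\<bar> powr q) \<le> ?S"
        by (rule sum_mono2) (use fin \<open>int_faces_dir A j \<subseteq> faces_dir A j\<close> True in auto)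
      then show ?thesis using True S by (simp add: R_EE_val_def)
    next
      case False
      have "(\<Sum>\<sigma>\<in>int_faces_dir A j. \<bar>R_EE_val A i j v \<sigma>\<bar> powr q)
          \<le> (\<Sum>\<sigma>\<in>int_faces_dir A j. \<Sum>\<sigma>'\<in>nbr_faces A i \<sigma>. \<bar>v \<sigma>'\<bar> powr q)"
      proof (rule sum_mono)
        fix \<sigma> assume "\<sigma> \<in> int_faces_dir A j"
        then obtain k where k: "\<sigma> = (j, k)" unfolding int_faces_dir_def faces_dir_def by (cases \<sigma>) auto
        show "\<bar>R_EE_val A i j v \<sigma>\<bar> powr q \<le> (\<Sum>\<sigma>'\<in>nbr_faces A i \<sigma>. \<bar>v \<sigma>'\<bar> powr q)"
          unfolding R_EE_val_def k using False card_nbr_faces_le[of A i j k]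
            abs_mean_powr_le_sum_powr[OF finite_nbr_faces _ _ \<open>1 \<le> q\<close>, where n = 4] by simp
      qed
      also have "\<dots> \<le> 4 * ?S"
      proof (rule sum_sum_le_mult_sum_if_card_le[OF fin])
        fix f assume "f \<in> faces_dir A i"
        then obtain k' where "f = (i, k')" unfolding faces_dir_def by (cases f) auto
        then show "real (card {\<sigma>\<in>int_faces_dir A j. f \<in> nbr_faces A i \<sigma>}) \<le> 4"
          using card_int_faces_with_nbr_face_le[of A j i k'] by simp
      qed (auto simp: nbr_faces_def)
      finally show ?thesis .
    qed
  qed (use h3 in simp)
  finally show ?thesis by simp
qed

lemma weighted_sum_R_M_le:
  assumes G: "MAC_grid \<Omega> x A" and "1 \<le> q"
  shows "(\<Sum>K\<in>A. \<bar>1/2 * (\<Sum>\<sigma>\<in>faces_dir A i \<inter> cell_faces K. v \<sigma>)\<bar> powr q * measure lborel (cell x K))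
       \<le> 2 * mesh_size x A ^ 3 * (\<Sum>\<sigma>\<in>faces_dir A i. \<bar>v \<sigma>\<bar> powr q)"
    (is "?X \<le> 2 * ?h3 * ?S")
proof -
  have fin: "finite A" "finite (faces_dir A i)"
    using MAC_gridD(2)[OF G] finite_faces_dir by blast+
  have "?X \<le> (\<Sum>K\<in>A. (\<Sum>\<sigma>\<in>faces_dir A i \<inter> cell_faces K. \<bar>v \<sigma>\<bar> powr q) * ?h3)"
  proof (rule sum_mono, rule mult_mono)
    fix K assume "K \<in> A"
    show "\<bar>1/2 * (\<Sum>\<sigma>\<in>faces_dir A i \<inter> cell_faces K. v \<sigma>)\<bar> powr q
        \<le> (\<Sum>\<sigma>\<in>faces_dir A i \<inter> cell_faces K. \<bar>v \<sigma>\<bar> powr q)"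
      using card_faces_dir_Int_cell_faces_le[of A i K]
        abs_mean_powr_le_sum_powr[OF finite_faces_dir_Int_cell_faces _ _ \<open>1 \<le> q\<close>, where n = 2] by simp
    show "measure lborel (cell x K) \<le> ?h3" using measure_cell_le[OF G \<open>K \<in> A\<close>] .
  qed (auto intro: sum_nonneg)
  also have "\<dots> = ?h3 * (\<Sum>K\<in>A. \<Sum>\<sigma>\<in>faces_dir A i \<inter> cell_faces K. \<bar>v \<sigma>\<bar> powr q)"
    by (simp add: sum_distrib_left mult.commute)
  also have "\<dots> \<le> ?h3 * (2 * ?S)"
  proof (rule mult_left_mono)
    show "(\<Sum>K\<in>A. \<Sum>\<sigma>\<in>faces_dir A i \<inter> cell_faces K. \<bar>v \<sigma>\<bar> powr q) \<le> 2 * ?S"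
    proof (rule sum_sum_le_mult_sum_if_card_le[OF fin])
      fix f assume "f \<in> faces_dir A i"
      then obtain k' where "f = (i, k')" unfolding faces_dir_def by (cases f) auto
      have "card {K\<in>A. f \<in> faces_dir A i \<inter> cell_faces K} \<le> card {K\<in>A. (i, k') \<in> cell_faces K}"
        by (rule card_mono[OF finite_cells_with_face]) (use \<open>f = (i, k')\<close> in auto)
      then show "real (card {K\<in>A. f \<in> faces_dir A i \<inter> cell_faces K}) \<le> 2"
        using card_cells_with_face_le[of A i k'] by linarith
    qed auto
  qed (use mesh_size_pos[OF G] in simp)
  finally show ?thesis by simp
qed

lemma powr_inverse_le_if_weighted_sums:
  fixes \<eta> h q X Y S :: real
  assumes "0 < \<eta>" "0 < h" "1 \<le> q" "0 \<le> X"
    and X: "X \<le> 8 * h^3 * S" and Y: "(\<eta> * h / 2)^3 * S \<le> Y"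
  shows "X powr (1/q) \<le> (64 / \<bar>\<eta>\<bar>^3 + 1) * Y powr (1/q)"
proof (rule powr_inverse_le_mult_powr_inverse)
  have "0 \<le> 8 * h^3 * S" using assms(4) X by linarith
  then have "0 \<le> S" using assms(2) by (simp add: zero_le_mult_iff)
  then have "0 \<le> (\<eta> * h / 2)^3 * S" using assms(1,2) by simp
  then show "0 \<le> Y" using Y by linarith
  have "X \<le> (64 / \<eta>^3) * ((\<eta> * h / 2)^3 * S)"
    using X assms(1) by (simp add: field_simps power_mult_distrib)
  also have "\<dots> \<le> (64 / \<eta>^3) * Y" using assms(1) Y by (intro mult_left_mono) auto
  also have "\<dots> \<le> (64 / \<bar>\<eta>\<bar>^3 + 1) * Y" using assms(1) \<open>0 \<le> Y\<close> by (simp add: distrib_right)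
  finally show "X \<le> (64 / \<bar>\<eta>\<bar>^3 + 1) * Y" .
qed (use assms in auto)

lemma Lq_norm_R_EE_le:
  assumes G: "MAC_grid \<Omega> x A" and "1 \<le> q"
  shows "Lq_norm \<Omega> q (R_EE x A i j v) \<le> (64 / \<bar>eta x A\<bar>^3 + 1) * Lq_norm \<Omega> q (fun_E x A i v)"
proof -
  have "0 < q" using \<open>1 \<le> q\<close> by simp
  show ?thesis
    unfolding Lq_norm_R_EE[OF G \<open>0 < q\<close>] Lq_norm_fun_E[OF G \<open>0 < q\<close>]
    by (rule powr_inverse_le_if_weighted_sums[OF eta_pos[OF G] mesh_size_pos[OF G] \<open>1 \<le> q\<close> _
          weighted_sum_R_EE_le[OF G \<open>1 \<le> q\<close>] power_mult_sum_le_weighted_sum_dual_cells[OF G]])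
      (auto intro: sum_nonneg)
qed

lemma Lq_norm_R_M_le:
  assumes G: "MAC_grid \<Omega> x A" and "1 \<le> q"
  shows "Lq_norm \<Omega> q (R_M x A i v) \<le> (64 / \<bar>eta x A\<bar>^3 + 1) * Lq_norm \<Omega> q (fun_E x A i v)"
proof -
  let ?S = "\<Sum>\<sigma>\<in>faces_dir A i. \<bar>v \<sigma>\<bar> powr q"
  have "0 < q" using \<open>1 \<le> q\<close> by simp
  have weaken: "2 * mesh_size x A ^ 3 * ?S \<le> 8 * mesh_size x A ^ 3 * ?S"
    using mesh_size_pos[OF G] by (intro mult_right_mono) (auto intro: sum_nonneg)
  show ?thesis
    unfolding Lq_norm_R_M[OF G \<open>0 < q\<close>] Lq_norm_fun_E[OF G \<open>0 < q\<close>]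
    by (rule powr_inverse_le_if_weighted_sums[OF eta_pos[OF G] mesh_size_pos[OF G] \<open>1 \<le> q\<close> _
          order_trans[OF weighted_sum_R_M_le[OF G \<open>1 \<le> q\<close>] weaken] power_mult_sum_le_weighted_sum_dual_cells[OF G]])
      (auto intro: sum_nonneg)
qed

theorem lemma7p1:
  "\<exists>C :: real \<Rightarrow> real.
     (\<forall>t. 0 \<le> C t) \<and> (\<forall>a b. 0 < a \<longrightarrow> a \<le> b \<longrightarrow> C b \<le> C a) \<and>
     (\<forall>(\<Omega> :: (real^3) set) x A. MAC_grid \<Omega> x A \<longrightarrow>
        (\<forall>q :: real. 1 \<le> q \<longrightarrow>
          (\<forall>i j (v :: face \<Rightarrow> real).
              (\<forall>\<sigma> \<in> faces_dir A i - int_faces_dir A i. v \<sigma> = 0) \<longrightarrow>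
              Lq_norm \<Omega> q (R_EE x A i j v) \<le> C (eta x A) * Lq_norm \<Omega> q (fun_E x A i v)) \<and>
          (\<forall>i (v :: face \<Rightarrow> real).
              Lq_norm \<Omega> q (R_M x A i v) \<le> C (eta x A) * Lq_norm \<Omega> q (fun_E x A i v))))"
proof (intro exI[of _ "\<lambda>t. 64 / \<bar>t\<bar>^3 + 1"] conjI allI impI)
  show "0 \<le> 64 / \<bar>t\<bar>^3 + 1" for t :: real by simp
  show "64 / \<bar>b\<bar>^3 + 1 \<le> 64 / \<bar>a\<bar>^3 + 1" if "0 < a" "a \<le> b" for a b :: real
    using that by (simp add: frac_le power_mono)
qed (simp_all add: Lq_norm_R_EE_le Lq_norm_R_M_le)

end
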